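(* Let $c>1$ be an irrational number, let $f(n)=[c^{-1}(n+1)]-[c^{-1}n]$ (the indicator function of $\{[cj]:j\ge1\}$), and for a positive integer $m$ let $x=[mc]$. Then, as $m\to\infty$, $$\sum_{n=1}^x \frac{f(n)}{n} = \frac{1}{c}+ \frac{1}{c}(\log m + \log c + \gamma) -\sum_{n=1}^\infty \frac{\{c^{-1}(n+1)\}}{n(n+1)} + O\left(\frac{1}{m}\right),$$ where $\gamma$ is Euler's constant.
   Context: $[x]$ is the greatest integer not exceeding $x$ and $\{x\}=x-[x]$. *)

theory Defs
  imports "HOL-Analysis.Analysis" "HOL-Library.Landau_Symbols"
begin

definition beatty_ind :: "real \<Rightarrow> nat \<Rightarrow> int" where
  "beatty_ind c n = \<lfloor>real (n + 1) / c\<rfloor> - \<lfloor>real n / c\<rfloor>"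

end

theory Submission
  imports Defs
begin

text \<open>Write \<open>g n = \<lfloor>n/c\<rfloor>\<close>, so that \<open>f n = g (n+1) - g n\<close>. Summation by parts turns
  \<open>\<Sum>n\<le>x. f n / n\<close> into a boundary term \<open>g (x+1) / x\<close> plus \<open>\<Sum> g (n+1) / (n (n+1))\<close>.
  For \<open>x = \<lfloor>m c\<rfloor>\<close> one has \<open>g (x+1) = m\<close>, so the boundary term is \<open>1/c + O(1/m)\<close>;
  splitting \<open>g (n+1) = (n+1)/c - {(n+1)/c}\<close> turns the remaining sum into \<open>H/c\<close>, with \<open>H\<close> a
  harmonic number, minus a partial sum of a series whose tail is \<open>O(1/x)\<close>.
  Finally \<open>H = ln x + \<gamma> + O(1/x)\<close> and \<open>ln x = ln m + ln c + O(1/m)\<close>.\<close>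

lemma summation_by_parts_inverse_index:
  fixes g :: "nat \<Rightarrow> real"
  shows "(\<Sum>n = 1..Suc N. (g (n + 1) - g n) / real n)
           = g (N + 2) / real (Suc N) - g 1
             + (\<Sum>n<N. g (n + 2) / (real (Suc n) * real (Suc n + 1)))"
proof (induction N)
  case 0
  then show ?case by simp
next
  case (Suc N)
  have "a / (r + 1) + (b - a) / (r + 2) = b / (r + 2) + a / ((r + 1) * (r + 2))"
    if "r \<ge> 0" for a b r :: real
  proof -
    have "r + 1 \<noteq> 0" "r + 2 \<noteq> 0" "(r + 1) * (r + 2) \<noteq> 0" using that by simp_all
    then show ?thesis by (simp add: divide_simps) (simp add: algebra_simps)
  qed
  from this[of "real N" "g (N + 2)" "g (N + 3)"]
  have step: "g (N + 2) / real (Suc N) + (g (N + 3) - g (N + 2)) / real (N + 2)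
      = g (N + 3) / real (N + 2) + g (N + 2) / (real (Suc N) * real (Suc N + 1))"
    by (simp add: add_ac)
  have "(\<Sum>n = 1..Suc (Suc N). (g (n + 1) - g n) / real n)
       = (\<Sum>n = 1..Suc N. (g (n + 1) - g n) / real n) + (g (N + 3) - g (N + 2)) / real (N + 2)"
    by (simp add: numeral_eq_Suc)
  also have "\<dots> = g (Suc N + 2) / real (Suc (Suc N)) - g 1
          + (\<Sum>n<Suc N. g (n + 2) / (real (Suc n) * real (Suc n + 1)))"
    using Suc step by (simp add: numeral_eq_Suc)
  finally show ?case .
qed

lemma telescoping_inverse_sums:
  assumes "x \<ge> (1::nat)"
  shows "(\<lambda>k. 1 / real (k + x) - 1 / real (Suc k + x)) sums (1 / real x)"
proof -
  have "(\<lambda>k. 1 / real (k + x)) \<longlonglongrightarrow> 0"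
    using LIMSEQ_ignore_initial_segment[OF lim_1_over_n, of x] by simp
  from telescope_sums'[OF this] show ?thesis by simp
qed

lemma harm_minus_ln_bound:
  "\<bar>harm N - ln (real N + 2) - euler_mascheroni\<bar> \<le> 3 / (2 * real (Suc N))"
proof -
  define h where "h = 1 / real (Suc N)"
  have H: "harm (Suc N) = harm N + h"
    by (simp add: harm_Suc inverse_eq_divide h_def)
  have L: "real (N + 2) = real N + 2" by simp
  have "harm N + h - ln (real N + 2) \<le> euler_mascheroni"
    using euler_mascheroni_lower[of N] unfolding H L
    by (smt (verit) divide_nonneg_nonneg of_nat_0_le_iff)
  moreover have "euler_mascheroni \<le> harm N + h - ln (real N + 2) + h / 2"
    using euler_mascheroni_upper[of N] unfolding H L by (simp add: h_def algebra_simps)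
  moreover have "3 / (2 * real (Suc N)) = 3 / 2 * h" "h \<ge> 0" by (simp_all add: h_def)
  ultimately show ?thesis unfolding abs_le_iff by linarith
qed

lemma ln_minus_ln_le:
  fixes y z :: real
  assumes "0 < y" "y \<le> z"
  shows "ln z - ln y \<le> (z - y) / y"
proof -
  have "ln z - ln y = ln (z / y)" using assms by (simp add: ln_div)
  also have "\<dots> \<le> z / y - 1" using assms by (intro ln_le_minus_one) simp
  also have "\<dots> = (z - y) / y" using assms by (simp add: field_simps)
  finally show ?thesis .
qed

lemma nat_floor_mult_bounds:
  fixes c :: real
  assumes "c > 1"
  shows "real m \<le> real (nat \<lfloor>real m * c\<rfloor>)"
    and "real (nat \<lfloor>real m * c\<rfloor>) \<le> real m * c"
    and "real m * c < real (nat \<lfloor>real m * c\<rfloor>) + 1"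
proof -
  have mc: "real m * c \<ge> 0" using assms by simp
  have "real m * 1 \<le> real m * c" using assms by (intro mult_left_mono) simp_all
  then have "int m \<le> \<lfloor>real m * c\<rfloor>" by (simp add: le_floor_iff)
  then show "real m \<le> real (nat \<lfloor>real m * c\<rfloor>)" by linarith
  show "real (nat \<lfloor>real m * c\<rfloor>) \<le> real m * c" using mc by linarith
  show "real m * c < real (nat \<lfloor>real m * c\<rfloor>) + 1" using mc by linarith
qed

lemma floor_succ_floor_mult_divide:
  fixes c :: real
  assumes "c > 1"
  shows "\<lfloor>(real (nat \<lfloor>real m * c\<rfloor>) + 1) / c\<rfloor> = int m"
proof -
  note bounds = nat_floor_mult_bounds[OF assms, of m]
  have "real m < (real (nat \<lfloor>real m * c\<rfloor>) + 1) / c"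
    using bounds(3) assms by (simp add: field_simps)
  moreover have "(real (nat \<lfloor>real m * c\<rfloor>) + 1) / c < real m + 1"
  proof -
    have "real (nat \<lfloor>real m * c\<rfloor>) + 1 \<le> real m * c + 1" using bounds(2) by simp
    also have "\<dots> < (real m + 1) * c" using assms by (simp add: algebra_simps)
    finally show ?thesis using assms by (simp add: field_simps)
  qed
  ultimately show ?thesis by (simp add: floor_eq_iff)
qed

definition beatty_weight :: "real \<Rightarrow> nat \<Rightarrow> real" where
  "beatty_weight c n = frac (real (Suc n + 1) / c) / (real (Suc n) * real (Suc n + 1))"

lemma beatty_weight_nonneg: "beatty_weight c n \<ge> 0"
  unfolding beatty_weight_def by (simp add: frac_ge_0)

lemma beatty_weight_le: "beatty_weight c n \<le> 1 / real (n + 1) - 1 / real (Suc n + 1)"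
proof -
  have "beatty_weight c n \<le> 1 / (real (Suc n) * real (Suc n + 1))"
    unfolding beatty_weight_def by (intro divide_right_mono) (auto simp: less_imp_le[OF frac_lt_1])
  also have "\<dots> = 1 / real (n + 1) - 1 / real (Suc n + 1)" by (simp add: field_simps)
  finally show ?thesis .
qed

lemma summable_beatty_weight: "summable (beatty_weight c)"
  by (rule summable_comparison_test[OF _ sums_summable[OF telescoping_inverse_sums[of 1]]])
     (use beatty_weight_nonneg beatty_weight_le in auto)

lemma beatty_weight_tail_bounds:
  "0 \<le> (\<Sum>n. beatty_weight c n) - (\<Sum>n<N. beatty_weight c n)"
  "(\<Sum>n. beatty_weight c n) - (\<Sum>n<N. beatty_weight c n) \<le> 1 / real (Suc N)"
proof -
  have tail: "(\<Sum>n. beatty_weight c n) - (\<Sum>n<N. beatty_weight c n) = (\<Sum>k. beatty_weight c (k + N))"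
    using suminf_split_initial_segment[OF summable_beatty_weight, of c N] by simp
  have sb: "summable (\<lambda>k. beatty_weight c (k + N))"
    using summable_ignore_initial_segment[OF summable_beatty_weight] .
  have tsum: "(\<lambda>k. 1 / real (k + Suc N) - 1 / real (Suc k + Suc N)) sums (1 / real (Suc N))"
    by (rule telescoping_inverse_sums) simp
  have "(\<Sum>k. beatty_weight c (k + N)) \<le> (\<Sum>k. 1 / real (k + Suc N) - 1 / real (Suc k + Suc N))"
  proof (rule suminf_le)
    show "beatty_weight c (k + N) \<le> 1 / real (k + Suc N) - 1 / real (Suc k + Suc N)" for k
      using beatty_weight_le[of c "k + N"] by (simp add: add_ac)
  qed (use sb sums_summable[OF tsum] in auto)
  then show "(\<Sum>n. beatty_weight c n) - (\<Sum>n<N. beatty_weight c n) \<le> 1 / real (Suc N)"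
    using tail tsum by (simp add: sums_iff)
  show "0 \<le> (\<Sum>n. beatty_weight c n) - (\<Sum>n<N. beatty_weight c n)"
    unfolding tail using sb by (intro suminf_nonneg) (simp_all add: beatty_weight_nonneg)
qed

lemma beatty_harmonic_sum_eq:
  fixes c :: real
  assumes "c > 1" and "nat \<lfloor>real m * c\<rfloor> = Suc N"
  shows "(\<Sum>n = 1..Suc N. real_of_int (beatty_ind c n) / real n)
           = real m / real (Suc N) + (1 / c) * harm N - (\<Sum>n<N. beatty_weight c n)"
proof -
  define g where "g n = real_of_int \<lfloor>real n / c\<rfloor>" for n
  have "g (N + 2) = real m"
    using floor_succ_floor_mult_divide[OF assms(1), of m] assms(2) by (simp add: g_def add_ac)
  moreover have "g 1 = 0" unfolding g_def using assms(1) by (simp add: floor_eq_iff)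
  moreover have "g (n + 2) / (real (Suc n) * real (Suc n + 1))
                   = (1 / c) * (1 / real (Suc n)) - beatty_weight c n" for n
  proof -
    have "g (n + 2) = real (Suc n + 1) / c - frac (real (Suc n + 1) / c)"
      unfolding g_def frac_def by (simp add: add.commute)
    then have "g (n + 2) / (real (Suc n) * real (Suc n + 1))
        = (real (Suc n + 1) / c) / (real (Suc n) * real (Suc n + 1)) - beatty_weight c n"
      unfolding beatty_weight_def by (simp add: diff_divide_distrib)
    also have "(real (Suc n + 1) / c) / (real (Suc n) * real (Suc n + 1)) = (1 / c) * (1 / real (Suc n))"
      by (simp del: of_nat_Suc)
    finally show ?thesis .
  qed
  ultimately show ?thesis
    using summation_by_parts_inverse_index[of g N]
    by (simp add: g_def beatty_ind_def sum_subtractf sum_distrib_left harm_altdef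
                  inverse_eq_divide)
qed

lemma harm_minus_ln_mult_bound:
  fixes c :: real
  assumes "c > 1" and "m \<ge> 1" and x: "nat \<lfloor>real m * c\<rfloor> = Suc N"
  shows "\<bar>harm N - euler_mascheroni - ln (real m * c)\<bar> \<le> 3 / real m"
proof -
  note bounds = nat_floor_mult_bounds[OF assms(1), of m, unfolded x]
  have m0: "real m > 0" and mc0: "real m * c > 0" using assms(1,2) by simp_all
  have "0 \<le> ln (real N + 2) - ln (real m * c)" using bounds(3) mc0 by simp
  moreover have "ln (real N + 2) - ln (real m * c) \<le> 1 / real m"
  proof -
    have "ln (real N + 2) - ln (real m * c) \<le> (real N + 2 - real m * c) / (real m * c)"
      using bounds(3) mc0 by (intro ln_minus_ln_le) simp_all
    also have "\<dots> \<le> 1 / (real m * c)" using bounds(2) mc0 by (intro divide_right_mono) simp_all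
    also have "\<dots> \<le> 1 / real m" using m0 assms(1) by (simp add: frac_le)
    finally show ?thesis .
  qed
  moreover have "3 / (2 * real (Suc N)) \<le> 2 * (1 / real m)"
  proof -
    define h where "h = 1 / real (Suc N)"
    have "h \<le> 1 / real m" unfolding h_def using bounds(1) m0 by (simp add: frac_le)
    moreover have "3 / (2 * real (Suc N)) = 3 / 2 * h" "h \<ge> 0" by (simp_all add: h_def)
    ultimately show ?thesis by linarith
  qed
  moreover have "3 / real m = 3 * (1 / real m)" by simp
  ultimately show ?thesis
    using harm_minus_ln_bound[of N] unfolding abs_le_iff by linarith
qed

lemma beatty_boundary_term_bounds:
  fixes c :: real
  assumes "c > 1" and "m \<ge> 1"
  shows "0 \<le> real m / real (nat \<lfloor>real m * c\<rfloor>) - 1 / c"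
    and "real m / real (nat \<lfloor>real m * c\<rfloor>) - 1 / c \<le> 1 / real m"
proof -
  define x where "x = nat \<lfloor>real m * c\<rfloor>"
  note bounds = nat_floor_mult_bounds[OF assms(1), of m, folded x_def]
  have m0: "real m > 0" and c0: "c > 0" using assms by simp_all
  have x0: "real x > 0" using bounds(1) m0 by linarith
  have eq: "real m / real x - 1 / c = (real m * c - real x) / (real x * c)"
    using x0 c0 by (simp add: field_simps)
  show "0 \<le> real m / real x - 1 / c" unfolding eq using bounds(2) x0 c0 by simp
  have "(real m * c - real x) / (real x * c) \<le> 1 / (real x * c)"
    using bounds(3) x0 c0 by (intro divide_right_mono) simp_all
  also have "\<dots> \<le> 1 / real x" using x0 assms(1) by (simp add: frac_le)
  also have "\<dots> \<le> 1 / real m" using bounds(1) m0 by (simp add: frac_le)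
  finally show "real m / real x - 1 / c \<le> 1 / real m" unfolding eq .
qed

lemma beatty_harmonic_sum_error:
  fixes c :: real
  assumes "c > 1" and "m \<ge> 1"
  shows "\<bar>(\<Sum>n = 1..nat \<lfloor>real m * c\<rfloor>. real_of_int (beatty_ind c n) / real n)
            - (1 / c + (1 / c) * (ln (real m) + ln c + euler_mascheroni)
               - (\<Sum>n. beatty_weight c n))\<bar> \<le> 5 / real m"
proof -
  define x where "x = nat \<lfloor>real m * c\<rfloor>"
  have "real m \<le> real x" unfolding x_def by (rule nat_floor_mult_bounds(1)[OF assms(1)])
  then obtain N where xN: "x = Suc N" using assms(2) by (cases x) auto
  define w where "w = harm N - euler_mascheroni - ln (real m * c)"
  have "\<bar>w / c\<bar> \<le> \<bar>w\<bar> / 1"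
    unfolding abs_divide using assms(1) by (intro divide_left_mono) simp_all
  moreover have "\<bar>w\<bar> \<le> 3 / real m"
    unfolding w_def using assms x_def xN by (intro harm_minus_ln_mult_bound) simp_all
  ultimately have w: "\<bar>w / c\<bar> \<le> 3 * (1 / real m)" by simp
  have "(\<Sum>n = 1..x. real_of_int (beatty_ind c n) / real n)
          = real m / real x + (1 / c) * harm N - (\<Sum>n<N. beatty_weight c n)"
    unfolding xN using x_def xN by (intro beatty_harmonic_sum_eq[OF assms(1)]) simp
  moreover have "ln (real m) + ln c = ln (real m * c)" using assms by (simp add: ln_mult)
  ultimately have "(\<Sum>n = 1..x. real_of_int (beatty_ind c n) / real n)
            - (1 / c + (1 / c) * (ln (real m) + ln c + euler_mascheroni) - (\<Sum>n. beatty_weight c n))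
           = (real m / real x - 1 / c) + w / c
             + ((\<Sum>n. beatty_weight c n) - (\<Sum>n<N. beatty_weight c n))"
    by (simp add: w_def algebra_simps add_divide_distrib diff_divide_distrib)
  moreover have "1 / real (Suc N) \<le> 1 / real m"
    using \<open>real m \<le> real x\<close> xN assms(2) by (simp add: frac_le)
  moreover have "5 / real m = 5 * (1 / real m)" by simp
  ultimately show ?thesis
    using w beatty_boundary_term_bounds[OF assms] beatty_weight_tail_bounds[of c N]
    unfolding x_def[symmetric] abs_le_iff by linarith
qed

theorem lemma11:
  fixes c :: real
  assumes "c > 1" and "c \<notin> \<rat>"
  shows "(\<lambda>m::nat.
            (\<Sum>n = 1..nat \<lfloor>real m * c\<rfloor>. real_of_int (beatty_ind c n) / real n)
            - (1 / c + (1 / c) * (ln (real m) + ln c + euler_mascheroni)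
               - (\<Sum>n. frac (real (Suc n + 1) / c) / (real (Suc n) * real (Suc n + 1)))))
         \<in> O(\<lambda>m. 1 / real m)"
proof (rule bigoI[where c = 5])
  have "\<forall>m\<ge>1. \<bar>(\<Sum>n = 1..nat \<lfloor>real m * c\<rfloor>. real_of_int (beatty_ind c n) / real n)
            - (1 / c + (1 / c) * (ln (real m) + ln c + euler_mascheroni)
               - (\<Sum>n. beatty_weight c n))\<bar> \<le> 5 * (1 / real m)"
    using beatty_harmonic_sum_error[OF assms(1)] by simp
  then show "eventually (\<lambda>m. norm ((\<Sum>n = 1..nat \<lfloor>real m * c\<rfloor>. real_of_int (beatty_ind c n) / real n)
            - (1 / c + (1 / c) * (ln (real m) + ln c + euler_mascheroni)
               - (\<Sum>n. frac (real (Suc n + 1) / c) / (real (Suc n) * real (Suc n + 1)))))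
           \<le> 5 * norm (1 / real m)) sequentially"
    unfolding eventually_sequentially beatty_weight_def by auto
qed

end
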